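(* Let $v$ be an arbitrary bounded potential, $N\ge2$, and $\zeta_l,\zeta_r>0$. Then $$\lim_{\beta\to\infty}\beta\,\mathcal{J}_\beta(N)=\frac{2(\alpha_{in}^l\alpha_{out}^r-\alpha_{out}^l\alpha_{in}^r)}{\zeta_l\zeta_r(N-1)}.$$
   Context: Let $v:\mathbb{N}\to\mathbb{R}$ be bounded, $e_1,\dots,e_N$ the standard basis of $\mathbb{C}^N$, $p_n=|e_n\rangle\langle e_n|$, $h$ the Hermitian matrix $(h\psi)(n)=-\psi(n+1)-\psi(n-1)+v(n)\psi(n)$, $n=1,\dots,N$, $\psi(0)=\psi(N+1)=0$. Let $\alpha_{in}^l,\alpha_{out}^l,\alpha_{in}^r,\alpha_{out}^r\ge0$, $\zeta_l=\alpha_{in}^l+\alpha_{out}^l$, $\zeta_r=\alpha_{in}^r+\alpha_{out}^r$. For $\beta\ge0$ define $l_\beta(a)=-i[h,a]-\{\zeta_lp_1+\zeta_rp_N,a\}+\beta\left(\sum_{n=1}^Np_nap_n-a\right)$ on $M_N(\mathbb{C})$, $R_\infty^{(\beta)}=\int_0^\infty e^{sl_\beta}(2\alpha_{in}^lp_1+2\alpha_{in}^rp_N)\,ds$, and $\mathcal{J}_\beta(N)=2\,\mathrm{Im}\langle e_2,R^{(\beta)}_\infty e_1\rangle$. *)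

theory Defs
  imports "HOL-Analysis.Analysis"
begin

text \<open>N x N complex matrices are represented as functions nat \<Rightarrow> nat \<Rightarrow> complex,
  with the relevant entries indexed by {1..N} (the standard basis e_1,...,e_N).\<close>

type_synonym cmat = "nat \<Rightarrow> nat \<Rightarrow> complex"

definition mmul :: "nat \<Rightarrow> cmat \<Rightarrow> cmat \<Rightarrow> cmat" where
  "mmul N A B = (\<lambda>i j. \<Sum>k=1..N. A i k * B k j)"

definition mrestr :: "nat \<Rightarrow> cmat \<Rightarrow> cmat" where
  "mrestr N A = (\<lambda>i j. if i \<in> {1..N} \<and> j \<in> {1..N} then A i j else 0)"

definition proj :: "nat \<Rightarrow> cmat" where
  "proj n = (\<lambda>i j. if i = n \<and> j = n then 1 else 0)"

definition hamil :: "(nat \<Rightarrow> real) \<Rightarrow> nat \<Rightarrow> cmat" where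
  "hamil v N = (\<lambda>i j. if i \<in> {1..N} \<and> j \<in> {1..N} then
       (if i = j then complex_of_real (v i) else if i = j + 1 \<or> j = i + 1 then -1 else 0)
     else 0)"

definition lgen :: "(nat \<Rightarrow> real) \<Rightarrow> nat \<Rightarrow> real \<Rightarrow> real \<Rightarrow> real \<Rightarrow> cmat \<Rightarrow> cmat" where
  "lgen v N zl zr \<beta> a = mrestr N (\<lambda>i j.
      - \<i> * (mmul N (hamil v N) a i j - mmul N a (hamil v N) i j)
      - (mmul N (\<lambda>x y. of_real zl * proj 1 x y + of_real zr * proj N x y) a i j
         + mmul N a (\<lambda>x y. of_real zl * proj 1 x y + of_real zr * proj N x y) i j)
      + of_real \<beta> * ((\<Sum>n=1..N. mmul N (mmul N (proj n) a) (proj n) i j) - a i j))"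

definition semigrp :: "(cmat \<Rightarrow> cmat) \<Rightarrow> real \<Rightarrow> cmat \<Rightarrow> cmat" where
  "semigrp L s a = (\<lambda>i j. \<Sum>k. complex_of_real (s ^ k / fact k) * (L ^^ k) a i j)"

definition Rinf :: "(nat \<Rightarrow> real) \<Rightarrow> nat \<Rightarrow> real \<Rightarrow> real \<Rightarrow> real \<Rightarrow> real \<Rightarrow> real \<Rightarrow> cmat" where
  "Rinf v N ail aol air aor \<beta> = (\<lambda>i j. integral {0..} (\<lambda>s. (
      semigrp (lgen v N (ail + aol) (air + aor) \<beta>) s
        (\<lambda>x y. of_real (2 * ail) * proj 1 x y + of_real (2 * air) * proj N x y)) i j))"

definition Jcur :: "(nat \<Rightarrow> real) \<Rightarrow> nat \<Rightarrow> real \<Rightarrow> real \<Rightarrow> real \<Rightarrow> real \<Rightarrow> real \<Rightarrow> real" where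
  "Jcur v N ail aol air aor \<beta> = 2 * Im (Rinf v N ail aol air aor \<beta> 2 1)"

end

theory Submission
  imports Defs
begin

(* For beta > 0 the generator l_beta is dissipative, Re <b, l_beta b> = - D b with
   D b = sum_ij (zeta_i + zeta_j + beta [i ~= j]) |b_ij|^2, and hypocoercive: through the
   commutator with h, the differences of neighbouring diagonal entries of b are controlled by
   off-diagonal entries of b and of l_beta b, whence |b|^2 <= K (D b + D (l_beta b)).  So
   e^(s l_beta) decays exponentially and R = R_infty^(beta) is the unique solution of
   l_beta R = - (2 a_in^l p_1 + 2 a_in^r p_N); it is Hermitian and D R = O(1), so its
   off-diagonal entries are O(beta^(-1/2)).  The diagonal of l_beta R is a discrete continuity
   equation: the current Im R_(n+1,n) is the same on every bond and fixes R_11 and R_NN through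
   the boundary rates, while the (n+1,n) entry of l_beta R = 0 gives
   beta Im R_(n+1,n) = R_nn - R_(n+1,n+1) + O(beta^(-1/2)).  Summing over the N - 1 bonds gives
   beta J_beta(N) = 2 (a_in^l / zeta_l - a_in^r / zeta_r) / (N - 1) + O(beta^(-1/2)). *)

definition supported :: "nat \<Rightarrow> cmat \<Rightarrow> bool" where
  "supported N b \<longleftrightarrow> (\<forall>i j. \<not> (i \<in> {1..N} \<and> j \<in> {1..N}) \<longrightarrow> b i j = 0)"

definition frob_sq :: "nat \<Rightarrow> cmat \<Rightarrow> real" where
  "frob_sq N b = (\<Sum>i\<in>{1..N}. \<Sum>j\<in>{1..N}. (cmod (b i j))\<^sup>2)"

definition entry_sum :: "nat \<Rightarrow> cmat \<Rightarrow> real" where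
  "entry_sum N b = (\<Sum>i\<in>{1..N}. \<Sum>j\<in>{1..N}. cmod (b i j))"

definition frob_inner :: "nat \<Rightarrow> cmat \<Rightarrow> cmat \<Rightarrow> complex" where
  "frob_inner N a b = (\<Sum>i\<in>{1..N}. \<Sum>j\<in>{1..N}. cnj (a i j) * b i j)"

definition unit_mat :: "nat \<Rightarrow> nat \<Rightarrow> cmat" where
  "unit_mat p q = (\<lambda>i j. if i = p \<and> j = q then 1 else 0)"

definition mat_adj :: "cmat \<Rightarrow> cmat" where
  "mat_adj b = (\<lambda>i j. cnj (b j i))"

lemma supported_entry_zero: "supported N b \<Longrightarrow> \<not> (i \<in> {1..N} \<and> j \<in> {1..N}) \<Longrightarrow> b i j = 0"
  unfolding supported_def by blast

lemma double_sum_le: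
  fixes f :: "nat \<Rightarrow> nat \<Rightarrow> real"
  assumes "\<And>i j. i \<in> {1..N} \<Longrightarrow> j \<in> {1..N} \<Longrightarrow> f i j \<le> B"
  shows "(\<Sum>i\<in>{1..N}. \<Sum>j\<in>{1..N}. f i j) \<le> real N * real N * B"
proof -
  have "(\<Sum>i\<in>{1..N}. \<Sum>j\<in>{1..N}. f i j) \<le> (\<Sum>i\<in>{1..N}. \<Sum>j\<in>{1..N}. B)"
    using assms by (intro sum_mono) auto
  then show ?thesis by simp
qed

lemma double_sum_member_le:
  fixes f :: "nat \<Rightarrow> nat \<Rightarrow> real"
  assumes "\<And>i j. 0 \<le> f i j" "i \<in> {1..N}" "j \<in> {1..N}"
  shows "f i j \<le> (\<Sum>i\<in>{1..N}. \<Sum>j\<in>{1..N}. f i j)"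
proof -
  have "f i j \<le> (\<Sum>j\<in>{1..N}. f i j)"
    using assms by (intro member_le_sum) auto
  also have "\<dots> \<le> (\<Sum>i\<in>{1..N}. \<Sum>j\<in>{1..N}. f i j)"
    using assms by (intro member_le_sum sum_nonneg) auto
  finally show ?thesis .
qed

lemma entry_sum_nonneg: "0 \<le> entry_sum N b"
  unfolding entry_sum_def by (intro sum_nonneg) auto

lemma frob_sq_nonneg: "0 \<le> frob_sq N b"
  unfolding frob_sq_def by (intro sum_nonneg) auto

lemma norm_entry_le_entry_sum: "i \<in> {1..N} \<Longrightarrow> j \<in> {1..N} \<Longrightarrow> cmod (b i j) \<le> entry_sum N b"
  unfolding entry_sum_def by (rule double_sum_member_le) auto

lemma norm_entry_sq_le_frob_sq: "i \<in> {1..N} \<Longrightarrow> j \<in> {1..N} \<Longrightarrow> (cmod (b i j))\<^sup>2 \<le> frob_sq N b"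
  unfolding frob_sq_def by (rule double_sum_member_le) auto

lemma entry_sum_le_frob: "entry_sum N b \<le> real N * real N * sqrt (frob_sq N b)"
  unfolding entry_sum_def
  by (intro double_sum_le) (metis norm_entry_sq_le_frob_sq real_le_rsqrt)

lemma eq_zero_if_frob_sq_le_zero:
  assumes "supported N b" "frob_sq N b \<le> 0"
  shows "b = (\<lambda>i j. 0)"
proof (intro ext)
  fix i j
  show "b i j = 0"
  proof (cases "i \<in> {1..N} \<and> j \<in> {1..N}")
    case True
    then have "(cmod (b i j))\<^sup>2 \<le> 0"
      using norm_entry_sq_le_frob_sq[of i N j b] assms(2) by (meson order_trans)
    then show ?thesis by simp
  qed (use assms(1) supported_entry_zero in blast)
qed

lemma has_real_derivative_cmod_sq:
  assumes "(g has_vector_derivative g') (at t)"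
  shows "((\<lambda>t. (cmod (g t))\<^sup>2) has_real_derivative 2 * Re (cnj (g t) * g')) (at t)"
proof -
  have re: "((\<lambda>t. Re (g t)) has_real_derivative Re g') (at t)"
    and im: "((\<lambda>t. Im (g t)) has_real_derivative Im g') (at t)"
    unfolding has_real_derivative_iff_has_vector_derivative
    by (rule bounded_linear.has_vector_derivative[OF bounded_linear_Re assms],
        rule bounded_linear.has_vector_derivative[OF bounded_linear_Im assms])
  have "((\<lambda>t. (Re (g t))\<^sup>2 + (Im (g t))\<^sup>2) has_real_derivative
      2 * Re (g t) * Re g' + 2 * Im (g t) * Im g') (at t)"
    using DERIV_add[OF DERIV_power[OF re, of 2] DERIV_power[OF im, of 2]]
    by (simp add: algebra_simps)
  then show ?thesis unfolding cmod_power2 by (simp add: algebra_simps)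
qed

section \<open>The exponential series of a linear map on matrices\<close>

locale supported_linear_map =
  fixes N :: nat and L :: "cmat \<Rightarrow> cmat"
  assumes L_add: "L (\<lambda>i j. a i j + b i j) = (\<lambda>i j. L a i j + L b i j)"
    and L_scale: "L (\<lambda>i j. c * b i j) = (\<lambda>i j. c * L b i j)"
    and supported_L: "supported N (L b)"
begin

lemma L_zero: "L (\<lambda>i j. 0) = (\<lambda>i j. 0)"
  using L_scale[of 0 "\<lambda>i j. 0"] by simp

lemma L_sum: "finite A \<Longrightarrow> L (\<lambda>i j. \<Sum>x\<in>A. f x i j) = (\<lambda>i j. \<Sum>x\<in>A. L (f x) i j)"
  by (induction A rule: finite_induct) (simp_all add: L_zero L_add)

lemma supported_funpow: "supported N a \<Longrightarrow> supported N ((L ^^ k) a)"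
  by (cases k) (simp_all add: supported_L)

lemma unit_mat_expansion:
  assumes "supported N b"
  shows "b = (\<lambda>i j. \<Sum>p\<in>{1..N}. \<Sum>q\<in>{1..N}. b p q * unit_mat p q i j)"
proof (intro ext)
  fix i j
  have "(\<Sum>p\<in>{1..N}. \<Sum>q\<in>{1..N}. b p q * unit_mat p q i j)
      = (\<Sum>p\<in>{1..N}. if p = i then (\<Sum>q\<in>{1..N}. if q = j then b p q else 0) else 0)"
  proof (intro sum.cong refl)
    fix p
    have "b p q * unit_mat p q i j = (if p = i then (if q = j then b p q else 0) else 0)" for q
      unfolding unit_mat_def by auto
    then show "(\<Sum>q\<in>{1..N}. b p q * unit_mat p q i j)
        = (if p = i then (\<Sum>q\<in>{1..N}. if q = j then b p q else 0) else 0)"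
      by auto
  qed
  also have "\<dots> = (if i \<in> {1..N} \<and> j \<in> {1..N} then b i j else 0)"
    by (simp add: sum.delta')
  also have "\<dots> = b i j" using assms supported_entry_zero by auto
  finally show "b i j = (\<Sum>p\<in>{1..N}. \<Sum>q\<in>{1..N}. b p q * unit_mat p q i j)" by simp
qed

lemma L_expansion:
  assumes "supported N b"
  shows "L b i j = (\<Sum>p\<in>{1..N}. \<Sum>q\<in>{1..N}. L (unit_mat p q) i j * b p q)"
proof -
  have "L b i j = L (\<lambda>i j. \<Sum>p\<in>{1..N}. \<Sum>q\<in>{1..N}. b p q * unit_mat p q i j) i j"
    using unit_mat_expansion[OF assms] by metis
  then show ?thesis by (simp add: L_sum L_scale mult.commute)
qed

definition kernel_bound :: real where
  "kernel_bound = (\<Sum>i\<in>{1..N}. \<Sum>j\<in>{1..N}. \<Sum>p\<in>{1..N}. \<Sum>q\<in>{1..N}. cmod (L (unit_mat p q) i j))"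

lemma kernel_bound_nonneg: "0 \<le> kernel_bound"
  unfolding kernel_bound_def by (intro sum_nonneg) auto

lemma norm_L_entry_le:
  assumes "supported N b"
  shows "cmod (L b i j) \<le> kernel_bound * entry_sum N b"
proof (cases "i \<in> {1..N} \<and> j \<in> {1..N}")
  case True
  have "cmod (L b i j) \<le> (\<Sum>p\<in>{1..N}. \<Sum>q\<in>{1..N}. cmod (L (unit_mat p q) i j) * cmod (b p q))"
    unfolding L_expansion[OF assms]
    by (rule order_trans[OF norm_sum sum_mono], rule order_trans[OF norm_sum sum_mono]) (simp add: norm_mult)
  also have "\<dots> \<le> (\<Sum>p\<in>{1..N}. \<Sum>q\<in>{1..N}. cmod (L (unit_mat p q) i j) * entry_sum N b)"
    by (intro sum_mono mult_left_mono norm_entry_le_entry_sum) auto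
  also have "\<dots> \<le> kernel_bound * entry_sum N b"
    unfolding kernel_bound_def sum_distrib_right[symmetric] using True entry_sum_nonneg
    by (intro mult_right_mono double_sum_member_le) (auto intro!: sum_nonneg)
  finally show ?thesis .
next
  case False
  then show ?thesis
    using supported_entry_zero[OF supported_L] kernel_bound_nonneg entry_sum_nonneg by simp
qed

definition growth :: real where "growth = real N * real N * kernel_bound"

lemma growth_nonneg: "0 \<le> growth"
  unfolding growth_def using kernel_bound_nonneg by simp

lemma entry_sum_funpow_le: "supported N a \<Longrightarrow> entry_sum N ((L ^^ k) a) \<le> growth ^ k * entry_sum N a"
proof (induction k)
  case (Suc k)
  have "entry_sum N ((L ^^ Suc k) a) \<le> real N * real N * (kernel_bound * entry_sum N ((L ^^ k) a))"
    unfolding entry_sum_def[of N "(L ^^ Suc k) a"]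
    using norm_L_entry_le[OF supported_funpow[OF Suc.prems]] by (intro double_sum_le) simp
  also have "\<dots> = growth * entry_sum N ((L ^^ k) a)"
    unfolding growth_def by simp
  also have "\<dots> \<le> growth * (growth ^ k * entry_sum N a)"
    using Suc growth_nonneg by (intro mult_left_mono) auto
  finally show ?case by simp
qed simp

lemma norm_funpow_entry_le:
  assumes "supported N a"
  shows "cmod ((L ^^ k) a i j) \<le> growth ^ k * entry_sum N a"
proof (cases "i \<in> {1..N} \<and> j \<in> {1..N}")
  case True
  then show ?thesis
    using norm_entry_le_entry_sum entry_sum_funpow_le[OF assms] by (meson order_trans)
next
  case False
  then show ?thesis
    using supported_entry_zero[OF supported_funpow[OF assms]] growth_nonneg entry_sum_nonneg by simp
qed

lemma frob_sq_L_le: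
  assumes "supported N b"
  shows "frob_sq N (L b) \<le> real N * real N * growth\<^sup>2 * frob_sq N b"
proof -
  have "cmod (L b i j) \<le> growth * sqrt (frob_sq N b)" for i j
  proof -
    have "cmod (L b i j) \<le> kernel_bound * (real N * real N * sqrt (frob_sq N b))"
      using norm_L_entry_le[OF assms] entry_sum_le_frob kernel_bound_nonneg
      by (meson mult_left_mono order_trans)
    then show ?thesis unfolding growth_def by (simp add: mult_ac)
  qed
  then have "frob_sq N (L b) \<le> real N * real N * (growth * sqrt (frob_sq N b))\<^sup>2"
    unfolding frob_sq_def[of N "L b"] by (intro double_sum_le power_mono) auto
  then show ?thesis using frob_sq_nonneg by (simp add: power_mult_distrib)
qed

definition series_coeff :: "cmat \<Rightarrow> nat \<Rightarrow> nat \<Rightarrow> nat \<Rightarrow> complex" where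
  "series_coeff a i j k = (L ^^ k) a i j / fact k"

lemma semigrp_eq_power_series: "semigrp L s a i j = (\<Sum>k. series_coeff a i j k * of_real s ^ k)"
  unfolding semigrp_def series_coeff_def by (intro suminf_cong) (simp add: field_simps)

lemma summable_semigrp_series:
  assumes "supported N a"
  shows "summable (\<lambda>k. series_coeff a i j k * z ^ k)"
proof (rule summable_comparison_test')
  show "summable (\<lambda>k. entry_sum N a * (inverse (fact k) * (growth * norm z) ^ k))"
    by (intro summable_mult summable_exp)
  fix k :: nat
  have "norm (series_coeff a i j k * z ^ k) = cmod ((L ^^ k) a i j) * inverse (fact k) * norm z ^ k"
    unfolding series_coeff_def by (simp add: norm_mult norm_divide norm_power divide_inverse norm_inverse)
  also have "\<dots> \<le> (growth ^ k * entry_sum N a) * inverse (fact k) * norm z ^ k"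
    by (intro mult_right_mono norm_funpow_entry_le[OF assms]) auto
  also have "\<dots> = entry_sum N a * (inverse (fact k) * (growth * norm z) ^ k)"
    by (simp add: power_mult_distrib)
  finally show "norm (series_coeff a i j k * z ^ k)
      \<le> entry_sum N a * (inverse (fact k) * (growth * norm z) ^ k)" .
qed

lemma diffs_series_coeff: "diffs (series_coeff a i j) = series_coeff (L a) i j"
proof
  fix n
  have "(L ^^ Suc n) a = (L ^^ n) (L a)" by (simp add: funpow_swap1)
  moreover have "fact (Suc n) = (of_nat (Suc n) :: complex) * fact n" by (rule fact_Suc)
  moreover have "(of_nat (Suc n) :: complex) \<noteq> 0" "(fact n :: complex) \<noteq> 0" by (simp_all del: of_nat_Suc)
  ultimately show "diffs (series_coeff a i j) n = series_coeff (L a) i j n"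
    unfolding diffs_def series_coeff_def by (simp add: field_simps del: of_nat_Suc)
qed

lemma semigrp_has_vector_derivative:
  assumes "supported N a"
  shows "((\<lambda>s. semigrp L s a i j) has_vector_derivative semigrp L s (L a) i j) (at s within S)"
proof -
  have "((\<lambda>z. \<Sum>k. series_coeff a i j k * z ^ k) has_field_derivative
      (\<Sum>k. diffs (series_coeff a i j) k * of_real s ^ k)) (at (of_real s))"
    by (rule termdiffs_strong_converges_everywhere) (rule summable_semigrp_series[OF assms])
  then have "((\<lambda>x. \<Sum>k. series_coeff a i j k * of_real x ^ k) has_vector_derivative
      (\<Sum>k. diffs (series_coeff a i j) k * of_real s ^ k)) (at s within S)"
    by (rule has_vector_derivative_real_field)
  then show ?thesis unfolding semigrp_eq_power_series diffs_series_coeff .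
qed

lemma continuous_on_semigrp: "supported N a \<Longrightarrow> continuous_on S (\<lambda>t. semigrp L t a i j)"
  using has_vector_derivative_continuous[OF semigrp_has_vector_derivative]
  by (intro continuous_at_imp_continuous_on) blast

lemma supported_semigrp: "supported N a \<Longrightarrow> supported N (semigrp L s a)"
  using supported_funpow unfolding supported_def semigrp_def by simp

lemma semigrp_zero: "semigrp L 0 a = a"
proof (intro ext)
  fix i j
  have "semigrp L 0 a i j = (\<Sum>k. series_coeff a i j k * 0 ^ k)"
    unfolding semigrp_eq_power_series by simp
  also have "\<dots> = a i j" unfolding powser_zero by (simp add: series_coeff_def)
  finally show "semigrp L 0 a i j = a i j" .
qed

lemma semigrp_L_commute:
  assumes "supported N a"
  shows "semigrp L s (L a) = L (semigrp L s a)"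
proof (intro ext)
  fix i j
  let ?K = "\<lambda>p q. L (unit_mat p q) i j" and ?t = "\<lambda>a p q k. series_coeff a p q k * of_real s ^ k"
  have sm: "summable (?t a p q)" for p q by (rule summable_semigrp_series[OF assms])
  have "L (semigrp L s a) i j = (\<Sum>p\<in>{1..N}. \<Sum>q\<in>{1..N}. ?K p q * (\<Sum>k. ?t a p q k))"
    unfolding L_expansion[OF supported_semigrp[OF assms]] semigrp_eq_power_series ..
  also have "\<dots> = (\<Sum>k. \<Sum>p\<in>{1..N}. \<Sum>q\<in>{1..N}. ?K p q * ?t a p q k)"
    by (simp add: suminf_mult sm suminf_sum summable_sum summable_mult)
  also have "\<dots> = (\<Sum>k. ?t (L a) i j k)"
  proof (intro suminf_cong)
    fix k
    have "(L ^^ k) (L a) = L ((L ^^ k) a)" by (simp add: funpow_swap1)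
    then show "(\<Sum>p\<in>{1..N}. \<Sum>q\<in>{1..N}. ?K p q * ?t a p q k) = ?t (L a) i j k"
      unfolding series_coeff_def L_expansion[OF supported_funpow[OF assms]]
      by (simp add: sum_distrib_left sum_divide_distrib mult_ac)
  qed
  finally show "semigrp L s (L a) i j = L (semigrp L s a) i j"
    unfolding semigrp_eq_power_series by simp
qed

definition dissip :: "cmat \<Rightarrow> real" where
  "dissip b = - Re (frob_inner N b (L b))"

lemma frob_sq_semigrp_has_derivative:
  assumes "supported N a"
  shows "((\<lambda>t. frob_sq N (semigrp L t a)) has_real_derivative - 2 * dissip (semigrp L t a)) (at t)"
proof -
  have "((\<lambda>t. frob_sq N (semigrp L t a)) has_real_derivative
      (\<Sum>i\<in>{1..N}. \<Sum>j\<in>{1..N}. 2 * Re (cnj (semigrp L t a i j) * semigrp L t (L a) i j))) (at t)"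
    unfolding frob_sq_def
    by (intro DERIV_sum has_real_derivative_cmod_sq semigrp_has_vector_derivative[OF assms])
  also have "(\<Sum>i\<in>{1..N}. \<Sum>j\<in>{1..N}. 2 * Re (cnj (semigrp L t a i j) * semigrp L t (L a) i j))
      = 2 * Re (frob_inner N (semigrp L t a) (L (semigrp L t a)))"
    unfolding frob_inner_def semigrp_L_commute[OF assms] by (simp add: sum_distrib_left)
  also have "\<dots> = - 2 * dissip (semigrp L t a)"
    unfolding dissip_def by simp
  finally show ?thesis .
qed

definition semigrp_integral :: "cmat \<Rightarrow> cmat" where
  "semigrp_integral a = (\<lambda>i j. integral {0..} (\<lambda>t. semigrp L t a i j))"

end

section \<open>Hypocoercive decay\<close>

locale hypocoercive_map = supported_linear_map +
  fixes \<kappa> :: real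
  assumes \<kappa>_pos: "0 < \<kappa>"
    and hypocoercive: "supported N b \<Longrightarrow> frob_sq N b \<le> \<kappa> * (dissip b + dissip (L b))"
begin

definition decay_rate :: real where
  "decay_rate = 1 / ((1 + real N * real N * growth\<^sup>2) * \<kappa>)"

lemma decay_rate_pos: "0 < decay_rate"
  unfolding decay_rate_def using \<kappa>_pos by (simp add: add_pos_nonneg)

lemma energy_le_dissip:
  assumes "supported N b"
  shows "frob_sq N b + frob_sq N (L b) \<le> (dissip b + dissip (L b)) / decay_rate"
proof -
  have "frob_sq N b + frob_sq N (L b) \<le> (1 + real N * real N * growth\<^sup>2) * frob_sq N b"
    using frob_sq_L_le[OF assms] by (simp add: algebra_simps)
  also have "\<dots> \<le> (1 + real N * real N * growth\<^sup>2) * (\<kappa> * (dissip b + dissip (L b)))"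
    using hypocoercive[OF assms] by (intro mult_left_mono) auto
  finally show ?thesis unfolding decay_rate_def by (simp add: mult_ac)
qed

lemma energy_decay:
  assumes a: "supported N a" and t: "0 \<le> t"
  shows "frob_sq N (semigrp L t a) + frob_sq N (semigrp L t (L a))
      \<le> (frob_sq N a + frob_sq N (L a)) * exp (- 2 * decay_rate * t)"
proof -
  \<comment> \<open>The norm of the orbit alone is not controlled by its dissipation, but together with the
    norm of its derivative it is, by hypocoercivity.\<close>
  define W where "W t = frob_sq N (semigrp L t a) + frob_sq N (semigrp L t (L a))" for t
  define D where "D t = dissip (semigrp L t a) + dissip (semigrp L t (L a))" for t
  have dW: "(W has_real_derivative - 2 * D t) (at t)" for t
    unfolding W_def D_def
    using DERIV_add[OF frob_sq_semigrp_has_derivative[OF a] frob_sq_semigrp_has_derivative[OF supported_L]]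
    by (simp add: algebra_simps)
  have W_le: "decay_rate * W t \<le> D t" for t
    using energy_le_dissip[OF supported_semigrp[OF a], of t] decay_rate_pos
    unfolding W_def D_def semigrp_L_commute[OF a] by (simp add: field_simps)
  define \<phi> where "\<phi> t = exp (2 * decay_rate * t) * W t" for t
  have "(\<phi> has_real_derivative exp (2 * decay_rate * t) * (2 * decay_rate * W t - 2 * D t)) (at t)" for t
    unfolding \<phi>_def
    using DERIV_mult[OF DERIV_fun_exp[OF DERIV_cmult[OF DERIV_ident]] dW, of "2 * decay_rate" t]
    by (simp add: algebra_simps)
  moreover have "exp (2 * decay_rate * t) * (2 * decay_rate * W t - 2 * D t) \<le> 0" for t
    using W_le[of t] by (simp add: mult_nonneg_nonpos)
  ultimately have "\<phi> t \<le> \<phi> 0"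
    by (intro DERIV_nonpos_imp_nonincreasing[OF t]) blast
  then have "W t \<le> W 0 * exp (- 2 * decay_rate * t)"
    unfolding \<phi>_def by (simp add: exp_minus field_simps)
  then show ?thesis unfolding W_def semigrp_zero .
qed

lemma decay_bound_nonneg: "0 \<le> sqrt (frob_sq N a + frob_sq N (L a)) * exp (- decay_rate * t)"
  using frob_sq_nonneg[of N a] frob_sq_nonneg[of N "L a"] by simp

lemma norm_semigrp_entry_le:
  assumes a: "supported N a" and t: "0 \<le> t"
  shows "cmod (semigrp L t a i j) \<le> sqrt (frob_sq N a + frob_sq N (L a)) * exp (- decay_rate * t)"
proof (cases "i \<in> {1..N} \<and> j \<in> {1..N}")
  case True
  have "(cmod (semigrp L t a i j))\<^sup>2 \<le> frob_sq N (semigrp L t a)"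
    using True by (intro norm_entry_sq_le_frob_sq) auto
  also have "\<dots> \<le> (frob_sq N a + frob_sq N (L a)) * exp (- 2 * decay_rate * t)"
    using energy_decay[OF a t] frob_sq_nonneg[of N "semigrp L t (L a)"] by linarith
  also have "\<dots> = (sqrt (frob_sq N a + frob_sq N (L a)) * exp (- decay_rate * t))\<^sup>2"
    using frob_sq_nonneg[of N a] frob_sq_nonneg[of N "L a"]
    by (simp add: power_mult_distrib flip: exp_of_nat_mult)
  finally show ?thesis
    by (rule power2_le_imp_le[OF _ decay_bound_nonneg])
next
  case False
  then show ?thesis
    using supported_entry_zero[OF supported_semigrp[OF a]] decay_bound_nonneg by simp
qed

lemma integrable_on_exp_decay:
  "(\<lambda>t. M * exp (- decay_rate * t)) integrable_on {0..}"
  using integrable_on_exp_minus_to_infinity[OF decay_rate_pos] by (rule integrable_on_mult_right)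

lemma semigrp_tendsto_zero:
  assumes a: "supported N a"
  shows "(\<lambda>k::nat. semigrp L (real k) a i j) \<longlonglongrightarrow> 0"
proof (rule Lim_null_comparison)
  have "norm (semigrp L (real k) a i j) \<le> sqrt (frob_sq N a + frob_sq N (L a)) * exp (- decay_rate) ^ k" for k
    using norm_semigrp_entry_le[OF a, of "real k"] by (simp add: exp_of_nat_mult[symmetric] mult.commute)
  then show "\<forall>\<^sub>F k in sequentially. norm (semigrp L (real k) a i j)
      \<le> sqrt (frob_sq N a + frob_sq N (L a)) * exp (- decay_rate) ^ k"
    by (intro always_eventually) simp
  show "(\<lambda>k. sqrt (frob_sq N a + frob_sq N (L a)) * exp (- decay_rate) ^ k) \<longlonglongrightarrow> 0"
    using decay_rate_pos by (intro tendsto_mult_right_zero LIMSEQ_power_zero) auto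
qed

lemma tendsto_truncation:
  "0 \<le> t \<Longrightarrow> (\<lambda>k::nat. if t \<in> {0..real k} then g t else 0) \<longlonglongrightarrow> (g t :: complex)"
  by (intro tendsto_eventually eventually_sequentiallyI[of "nat \<lceil>t\<rceil>"]) (auto simp: le_nat_iff)

lemma semigrp_integrable:
  assumes a: "supported N a"
  shows "(\<lambda>t. semigrp L t a i j) integrable_on {0..}"
  by (rule measurable_bounded_by_integrable_imp_integrable[OF
        continuous_imp_measurable_on_sets_lebesgue[OF continuous_on_semigrp[OF a]] integrable_on_exp_decay])
     (use norm_semigrp_entry_le[OF a] in auto)

lemma semigrp_L_has_integral:
  assumes a: "supported N a"
  shows "((\<lambda>t. semigrp L t (L a) i j) has_integral - a i j) {0..}"
proof (rule has_integral_dominated_convergence)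
  let ?f = "\<lambda>(k::nat) t. if t \<in> {0..real k} then semigrp L t (L a) i j else 0"
  show "(?f k has_integral (semigrp L (real k) a i j - a i j)) {0..}" for k
  proof -
    have "((\<lambda>t. semigrp L t (L a) i j) has_integral
        (semigrp L (real k) a i j - semigrp L 0 a i j)) {0..real k}"
      by (intro fundamental_theorem_of_calculus semigrp_has_vector_derivative[OF a]) auto
    then show ?thesis unfolding semigrp_zero by (subst has_integral_restrict) auto
  qed
  show "(\<lambda>t. sqrt (frob_sq N (L a) + frob_sq N (L (L a))) * exp (- decay_rate * t)) integrable_on {0..}"
    by (rule integrable_on_exp_decay)
  show "\<forall>t\<in>{0..}. norm (?f k t)
      \<le> sqrt (frob_sq N (L a) + frob_sq N (L (L a))) * exp (- decay_rate * t)" for k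
    using norm_semigrp_entry_le[OF supported_L] decay_bound_nonneg by auto
  show "\<forall>t\<in>{0..}. (\<lambda>k. ?f k t) \<longlonglongrightarrow> semigrp L t (L a) i j"
    using tendsto_truncation by auto
  show "(\<lambda>k::nat. semigrp L (real k) a i j - a i j) \<longlonglongrightarrow> - a i j"
    using tendsto_diff[OF semigrp_tendsto_zero[OF a] tendsto_const] by simp
qed

lemma supported_semigrp_integral: "supported N a \<Longrightarrow> supported N (semigrp_integral a)"
  using supported_semigrp unfolding supported_def semigrp_integral_def by simp

lemma L_semigrp_integral:
  assumes a: "supported N a"
  shows "L (semigrp_integral a) = (\<lambda>i j. - a i j)"
proof (intro ext)
  fix i j
  let ?K = "\<lambda>p q. L (unit_mat p q) i j"
  have int: "(\<lambda>t. ?K p q * semigrp L t a p q) integrable_on {0..}" for p q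
    by (intro integrable_on_mult_right semigrp_integrable[OF a])
  have "L (semigrp_integral a) i j = (\<Sum>p\<in>{1..N}. \<Sum>q\<in>{1..N}. integral {0..} (\<lambda>t. ?K p q * semigrp L t a p q))"
    unfolding L_expansion[OF supported_semigrp_integral[OF a]] by (simp add: semigrp_integral_def)
  also have "\<dots> = integral {0..} (\<lambda>t. \<Sum>p\<in>{1..N}. \<Sum>q\<in>{1..N}. ?K p q * semigrp L t a p q)"
    by (simp add: integral_sum int integrable_sum)
  also have "\<dots> = integral {0..} (\<lambda>t. semigrp L t (L a) i j)"
    unfolding semigrp_L_commute[OF a] L_expansion[OF supported_semigrp[OF a]] ..
  also have "\<dots> = - a i j"
    by (rule integral_unique[OF semigrp_L_has_integral[OF a]])
  finally show "L (semigrp_integral a) i j = - a i j" .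
qed

lemma eq_zero_if_L_eq_zero:
  assumes "supported N d" "L d = (\<lambda>i j. 0)"
  shows "d = (\<lambda>i j. 0)"
proof (rule eq_zero_if_frob_sq_le_zero[OF assms(1)])
  have "dissip d = 0" "dissip (L d) = 0"
    unfolding dissip_def frob_inner_def assms(2) L_zero by simp_all
  then show "frob_sq N d \<le> 0" using hypocoercive[OF assms(1)] by simp
qed

end

section \<open>The dephasing Lindbladian of the chain\<close>

definition edge_rate :: "nat \<Rightarrow> real \<Rightarrow> real \<Rightarrow> nat \<Rightarrow> real" where
  "edge_rate N zl zr i = (if i = 1 then zl else 0) + (if i = N then zr else 0)"

definition hamil_commutator :: "(nat \<Rightarrow> real) \<Rightarrow> nat \<Rightarrow> cmat \<Rightarrow> cmat" where
  "hamil_commutator v N b i j =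
     - of_bool (i < N) * b (i+1) j - of_bool (1 < i) * b (i-1) j + of_real (v i) * b i j
     + of_bool (j < N) * b i (j+1) + of_bool (1 < j) * b i (j-1) - b i j * of_real (v j)"

lemma hamil_entry:
  assumes "i \<in> {1..N}" "k \<in> {1..N}"
  shows "hamil v N i k = (if k = i then of_real (v i) else 0) + (if k = i+1 then -1 else 0) + (if k+1 = i then -1 else 0)"
  using assms unfolding hamil_def by auto

lemma hamil_sym: "hamil v N i k = hamil v N k i"
  unfolding hamil_def by auto

lemma hamil_hermitian: "cnj (hamil v N i k) = hamil v N k i"
  unfolding hamil_def by auto

lemma mmul_hamil_left:
  assumes "i \<in> {1..N}"
  shows "mmul N (hamil v N) b i j = - of_bool (i < N) * b (i+1) j - of_bool (1 < i) * b (i-1) j + of_real (v i) * b i j"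
proof -
  have "mmul N (hamil v N) b i j = (\<Sum>k\<in>{1..N}. (if k = i then of_real (v i) * b k j else 0)
      + (if k = i+1 then - b k j else 0) + (if k = i - 1 \<and> 1 < i then - b k j else 0))"
    unfolding mmul_def using assms by (intro sum.cong refl) (auto simp: hamil_entry)
  then show ?thesis using assms by (auto simp: sum.distrib sum.delta')
qed

lemma mmul_hamil_right:
  assumes "j \<in> {1..N}"
  shows "mmul N b (hamil v N) i j = - of_bool (j < N) * b i (j+1) - of_bool (1 < j) * b i (j-1) + b i j * of_real (v j)"
proof -
  have "mmul N b (hamil v N) i j = (\<Sum>k\<in>{1..N}. (if k = j then b i k * of_real (v j) else 0)
      + (if k = j+1 then - b i k else 0) + (if k = j - 1 \<and> 1 < j then - b i k else 0))"
    unfolding mmul_def using assms by (intro sum.cong refl) (auto simp: hamil_entry hamil_sym[of v N _ j])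
  then show ?thesis using assms by (auto simp: sum.distrib sum.delta')
qed

lemma hamil_commutator_eq_mmul:
  assumes "i \<in> {1..N}" "j \<in> {1..N}"
  shows "hamil_commutator v N b i j = mmul N (hamil v N) b i j - mmul N b (hamil v N) i j"
  unfolding hamil_commutator_def mmul_hamil_left[OF assms(1)] mmul_hamil_right[OF assms(2)]
  by (simp add: algebra_simps)

lemma mmul_edge_left:
  assumes "i \<in> {1..N}"
  shows "mmul N (\<lambda>x y. of_real zl * proj 1 x y + of_real zr * proj N x y) b i j = of_real (edge_rate N zl zr i) * b i j"
proof -
  have "mmul N (\<lambda>x y. of_real zl * proj 1 x y + of_real zr * proj N x y) b i j
     = (\<Sum>k\<in>{1..N}. if k = i then of_real (edge_rate N zl zr i) * b k j else 0)"
    unfolding mmul_def proj_def edge_rate_def by (intro sum.cong refl) (auto simp: distrib_right)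
  then show ?thesis using assms by (simp add: sum.delta')
qed

lemma mmul_edge_right:
  assumes "j \<in> {1..N}"
  shows "mmul N b (\<lambda>x y. of_real zl * proj 1 x y + of_real zr * proj N x y) i j = of_real (edge_rate N zl zr j) * b i j"
proof -
  have "mmul N b (\<lambda>x y. of_real zl * proj 1 x y + of_real zr * proj N x y) i j
     = (\<Sum>k\<in>{1..N}. if k = j then of_real (edge_rate N zl zr j) * b i k else 0)"
    unfolding mmul_def proj_def edge_rate_def by (intro sum.cong refl) (auto simp: algebra_simps)
  then show ?thesis using assms by (simp add: sum.delta')
qed

lemma mmul_proj_left:
  assumes "n \<in> {1..N}"
  shows "mmul N (proj n) b i k = (if i = n then b n k else 0)"
proof -
  have "mmul N (proj n) b i k = (\<Sum>m\<in>{1..N}. if m = n then (if i = n then b m k else 0) else 0)"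
    unfolding mmul_def proj_def by (intro sum.cong refl) auto
  then show ?thesis using assms by (simp add: sum.delta')
qed

lemma mmul_proj_right:
  assumes "n \<in> {1..N}"
  shows "mmul N b (proj n) i j = (if j = n then b i n else 0)"
proof -
  have "mmul N b (proj n) i j = (\<Sum>m\<in>{1..N}. if m = n then (if j = n then b i m else 0) else 0)"
    unfolding mmul_def proj_def by (intro sum.cong refl) auto
  then show ?thesis using assms by (simp add: sum.delta')
qed

lemma dephasing_eq:
  assumes "i \<in> {1..N}" "j \<in> {1..N}"
  shows "(\<Sum>n=1..N. mmul N (mmul N (proj n) b) (proj n) i j) = (if i = j then b i j else 0)"
proof -
  have "(\<Sum>n=1..N. mmul N (mmul N (proj n) b) (proj n) i j)
      = (\<Sum>n=1..N. if n = i then (if i = j then b i j else 0) else 0)"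
    by (intro sum.cong refl) (auto simp: mmul_proj_left mmul_proj_right)
  then show ?thesis using assms by (simp add: sum.delta')
qed

lemma lgen_inside:
  assumes "i \<in> {1..N}" "j \<in> {1..N}"
  shows "lgen v N zl zr \<beta> b i j = - \<i> * hamil_commutator v N b i j
     - of_real (edge_rate N zl zr i + edge_rate N zl zr j) * b i j - (if i = j then 0 else of_real \<beta> * b i j)"
proof -
  have "i \<in> {1..N} \<and> j \<in> {1..N}" using assms by simp
  then show ?thesis
    by (simp only: lgen_def mrestr_def if_True hamil_commutator_eq_mmul[OF assms, symmetric]
        mmul_edge_left[OF assms(1)] mmul_edge_right[OF assms(2)] dephasing_eq[OF assms])
       (cases "i = j"; simp add: ring_distribs)
qed

lemma lgen_outside: "\<not> (i \<in> {1..N} \<and> j \<in> {1..N}) \<Longrightarrow> lgen v N zl zr \<beta> b i j = 0"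
  unfolding lgen_def mrestr_def by auto

lemma Im_frob_inner_mmul_hermitian_left:
  assumes H: "\<And>i k. cnj (H i k) = H k i"
  shows "Im (frob_inner N b (mmul N H b)) = 0"
proof -
  define T where "T = frob_inner N b (mmul N H b)"
  have T: "T = (\<Sum>i\<in>{1..N}. \<Sum>j\<in>{1..N}. \<Sum>k\<in>{1..N}. cnj (b i j) * H i k * b k j)"
    unfolding T_def frob_inner_def mmul_def by (simp add: sum_distrib_left mult.assoc)
  have "cnj T = (\<Sum>i\<in>{1..N}. \<Sum>j\<in>{1..N}. \<Sum>k\<in>{1..N}. b i j * H k i * cnj (b k j))"
    unfolding T by (simp add: H)
  also have "\<dots> = (\<Sum>j\<in>{1..N}. \<Sum>i\<in>{1..N}. \<Sum>k\<in>{1..N}. b i j * H k i * cnj (b k j))"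
    by (rule sum.swap)
  also have "\<dots> = (\<Sum>j\<in>{1..N}. \<Sum>k\<in>{1..N}. \<Sum>i\<in>{1..N}. b i j * H k i * cnj (b k j))"
    by (intro sum.cong refl sum.swap)
  also have "\<dots> = (\<Sum>j\<in>{1..N}. \<Sum>k\<in>{1..N}. \<Sum>i\<in>{1..N}. cnj (b k j) * H k i * b i j)"
    by (intro sum.cong refl) (simp add: mult_ac)
  also have "\<dots> = T" unfolding T by (rule sum.swap)
  finally have "Im (cnj T) = Im T" by simp
  then show ?thesis unfolding T_def[symmetric] by simp
qed

lemma Im_frob_inner_mmul_hermitian_right:
  assumes H: "\<And>i k. cnj (H i k) = H k i"
  shows "Im (frob_inner N b (mmul N b H)) = 0"
proof -
  define T where "T = frob_inner N b (mmul N b H)"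
  have T: "T = (\<Sum>i\<in>{1..N}. \<Sum>j\<in>{1..N}. \<Sum>k\<in>{1..N}. cnj (b i j) * b i k * H k j)"
    unfolding T_def frob_inner_def mmul_def by (simp add: sum_distrib_left mult.assoc)
  have "cnj T = (\<Sum>i\<in>{1..N}. \<Sum>j\<in>{1..N}. \<Sum>k\<in>{1..N}. b i j * cnj (b i k) * H j k)"
    unfolding T by (simp add: H)
  also have "\<dots> = (\<Sum>i\<in>{1..N}. \<Sum>k\<in>{1..N}. \<Sum>j\<in>{1..N}. b i j * cnj (b i k) * H j k)"
    by (intro sum.cong refl sum.swap)
  also have "\<dots> = T"
    unfolding T by (intro sum.cong refl) (simp add: mult_ac)
  finally have "Im (cnj T) = Im T" by simp
  then show ?thesis unfolding T_def[symmetric] by simp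
qed

lemma Im_frob_inner_hamil_commutator: "Im (frob_inner N b (hamil_commutator v N b)) = 0"
proof -
  have "frob_inner N b (hamil_commutator v N b)
      = frob_inner N b (mmul N (hamil v N) b) - frob_inner N b (mmul N b (hamil v N))"
    unfolding frob_inner_def
    by (simp add: hamil_commutator_eq_mmul right_diff_distrib sum_subtractf)
  then show ?thesis
    using Im_frob_inner_mmul_hermitian_left[OF hamil_hermitian, of N b]
      Im_frob_inner_mmul_hermitian_right[OF hamil_hermitian, of N b] by simp
qed

lemma hamil_commutator_add:
  "hamil_commutator v N (\<lambda>i j. a i j + b i j) i j = hamil_commutator v N a i j + hamil_commutator v N b i j"
  unfolding hamil_commutator_def by (simp add: algebra_simps)

lemma hamil_commutator_scale:
  "hamil_commutator v N (\<lambda>i j. c * b i j) i j = c * hamil_commutator v N b i j"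
  unfolding hamil_commutator_def by (simp add: algebra_simps)

lemma hamil_commutator_adj: "hamil_commutator v N (mat_adj b) i j = - cnj (hamil_commutator v N b j i)"
  unfolding hamil_commutator_def mat_adj_def by (simp add: algebra_simps)

lemma norm_of_bool_mult_le: "(c \<Longrightarrow> cmod x \<le> s) \<Longrightarrow> 0 \<le> s \<Longrightarrow> cmod (of_bool c * x) \<le> s"
  by (cases c) auto

locale lindblad_chain =
  fixes v :: "nat \<Rightarrow> real" and N :: nat and zl zr \<beta> :: real
  assumes two_le_N: "2 \<le> N" and zl_pos: "0 < zl" and zr_pos: "0 < zr" and \<beta>_pos: "0 < \<beta>"
begin

abbreviation L :: "cmat \<Rightarrow> cmat" where "L \<equiv> lgen v N zl zr \<beta>"

sublocale supported_linear_map N L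
proof
  show "supported N (L b)" for b
    unfolding supported_def using lgen_outside by blast
  show "L (\<lambda>i j. a i j + b i j) = (\<lambda>i j. L a i j + L b i j)" for a b
    by (intro ext, rename_tac i j, case_tac "i \<in> {1..N} \<and> j \<in> {1..N}")
       (auto simp: lgen_inside lgen_outside hamil_commutator_add algebra_simps)
  show "L (\<lambda>i j. c * b i j) = (\<lambda>i j. c * L b i j)" for c b
    by (intro ext, rename_tac i j, case_tac "i \<in> {1..N} \<and> j \<in> {1..N}")
       (auto simp: lgen_inside lgen_outside hamil_commutator_scale algebra_simps)
qed

lemma edge_rate_nonneg: "0 \<le> edge_rate N zl zr i"
  unfolding edge_rate_def using zl_pos zr_pos by auto

lemma edge_rate_le: "edge_rate N zl zr i \<le> zl + zr"
  unfolding edge_rate_def using zl_pos zr_pos by auto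

lemma edge_rate_1: "edge_rate N zl zr 1 = zl"
  unfolding edge_rate_def using two_le_N by auto

lemma edge_rate_N: "edge_rate N zl zr N = zr"
  unfolding edge_rate_def using two_le_N by auto

lemma edge_rate_interior: "1 < n \<Longrightarrow> n < N \<Longrightarrow> edge_rate N zl zr n = 0"
  unfolding edge_rate_def by auto

definition damping :: "nat \<Rightarrow> nat \<Rightarrow> real" where
  "damping i j = edge_rate N zl zr i + edge_rate N zl zr j + (if i = j then 0 else \<beta>)"

lemma damping_nonneg: "0 \<le> damping i j"
  unfolding damping_def using edge_rate_nonneg[of i] edge_rate_nonneg[of j] \<beta>_pos by auto

lemma dissip_eq: "dissip b = (\<Sum>i\<in>{1..N}. \<Sum>j\<in>{1..N}. damping i j * (cmod (b i j))\<^sup>2)"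
proof -
  have "cnj (b i j) * L b i j = - \<i> * (cnj (b i j) * hamil_commutator v N b i j)
      - of_real (damping i j * (cmod (b i j))\<^sup>2)"
    if "i \<in> {1..N}" "j \<in> {1..N}" for i j
    unfolding lgen_inside[OF that] damping_def complex_norm_square of_real_mult
    by (cases "i = j") (simp_all add: algebra_simps)
  then have "frob_inner N b (L b) = - \<i> * frob_inner N b (hamil_commutator v N b)
      - of_real (\<Sum>i\<in>{1..N}. \<Sum>j\<in>{1..N}. damping i j * (cmod (b i j))\<^sup>2)"
    unfolding frob_inner_def by (simp add: sum_subtractf sum_distrib_left)
  then show ?thesis
    unfolding dissip_def using Im_frob_inner_hamil_commutator[of N b v] by simp
qed

lemma dissip_nonneg: "0 \<le> dissip b"
  unfolding dissip_eq by (intro sum_nonneg mult_nonneg_nonneg damping_nonneg) auto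

lemma off_diag_le_dissip:
  assumes "i \<in> {1..N}" "j \<in> {1..N}" "i \<noteq> j"
  shows "\<beta> * (cmod (b i j))\<^sup>2 \<le> dissip b"
proof -
  have "\<beta> * (cmod (b i j))\<^sup>2 \<le> damping i j * (cmod (b i j))\<^sup>2"
    using assms edge_rate_nonneg[of i] edge_rate_nonneg[of j] unfolding damping_def
    by (intro mult_right_mono) auto
  also have "\<dots> \<le> dissip b"
    unfolding dissip_eq using assms
    by (intro double_sum_member_le mult_nonneg_nonneg damping_nonneg) auto
  finally show ?thesis .
qed

lemma norm_off_diag_le:
  assumes "i \<in> {1..N}" "j \<in> {1..N}" "i \<noteq> j" "dissip b \<le> Q"
  shows "cmod (b i j) \<le> sqrt (Q / \<beta>)"
proof -
  have "(cmod (b i j))\<^sup>2 \<le> Q / \<beta>"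
    using off_diag_le_dissip[OF assms(1-3), of b] assms(4) \<beta>_pos by (simp add: field_simps)
  then show ?thesis by (simp add: real_le_rsqrt)
qed

lemma corners_le_dissip: "2 * zl * (cmod (b 1 1))\<^sup>2 + 2 * zr * (cmod (b N N))\<^sup>2 \<le> dissip b"
proof -
  let ?f = "\<lambda>i j. damping i j * (cmod (b i j))\<^sup>2"
  have f_nonneg: "0 \<le> ?f i j" for i j by (intro mult_nonneg_nonneg damping_nonneg) auto
  have "?f 1 1 + ?f N N \<le> (\<Sum>j\<in>{1..N}. ?f 1 j) + (\<Sum>j\<in>{1..N}. ?f N j)"
    using two_le_N by (intro add_mono member_le_sum f_nonneg) auto
  also have "\<dots> = (\<Sum>i\<in>{1, N}. \<Sum>j\<in>{1..N}. ?f i j)"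
    using two_le_N by simp
  also have "\<dots> \<le> dissip b"
    unfolding dissip_eq using two_le_N by (intro sum_mono2 sum_nonneg f_nonneg) auto
  finally show ?thesis
    unfolding damping_def edge_rate_1 edge_rate_N by simp
qed

definition potential_sum :: real where
  "potential_sum = (\<Sum>i\<in>{1..N}. \<bar>v i\<bar>)"

lemma abs_v_le: "i \<in> {1..N} \<Longrightarrow> \<bar>v i\<bar> \<le> potential_sum"
  unfolding potential_sum_def by (intro member_le_sum) auto

lemma potential_sum_nonneg: "0 \<le> potential_sum"
  unfolding potential_sum_def by (intro sum_nonneg) auto

lemma norm_potential_mult_le:
  "i \<in> {1..N} \<Longrightarrow> cmod x \<le> s \<Longrightarrow> 0 \<le> s \<Longrightarrow> cmod (of_real (v i) * x) \<le> potential_sum * s"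
  using abs_v_le[of i] by (simp add: norm_mult) (intro mult_mono, auto)

definition diag_step_const :: real where
  "diag_step_const = 3 + 2 * (zl + zr) + \<beta> + 2 * potential_sum"

lemma diag_step_const_nonneg: "0 \<le> diag_step_const"
  unfolding diag_step_const_def using zl_pos zr_pos \<beta>_pos potential_sum_nonneg by simp

(* Apart from the diagonal difference, every term of the (n, n+1) entry of L b is an off-diagonal
   entry of b or of L b: this is how the commutator with h lets the dissipation of the
   off-diagonal entries control the diagonal. *)
lemma diag_difference_eq:
  assumes n: "1 \<le> n" "n < N"
  shows "b n n - b (n+1) (n+1) = \<i> * L b n (n+1)
      + \<i> * of_real (edge_rate N zl zr n + edge_rate N zl zr (n+1) + \<beta>) * b n (n+1)
      + of_bool (1 < n) * b (n-1) (n+1) + (- (of_real (v n) * b n (n+1)))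
      + (- (of_bool (n+1 < N) * b n (n+2))) + of_real (v (n+1)) * b n (n+1)"
proof -
  have inn: "n \<in> {1..N}" "n+1 \<in> {1..N}" using n by auto
  define c where "c = edge_rate N zl zr n + edge_rate N zl zr (n+1) + \<beta>"
  define p where "p = of_bool (1 < n) * b (n-1) (n+1)"
  define q where "q = of_bool (n+1 < N) * b n (n+2)"
  have L_entry: "L b n (n+1) = - \<i> * hamil_commutator v N b n (n+1) - of_real c * b n (n+1)"
    unfolding lgen_inside[OF inn] c_def by (simp add: algebra_simps)
  have "hamil_commutator v N b n (n+1) = \<i> * L b n (n+1) + \<i> * of_real c * b n (n+1)"
    unfolding L_entry by (simp add: algebra_simps)
  moreover have "hamil_commutator v N b n (n+1) = b n n - b (n+1) (n+1)
      - p + q + of_real (v n) * b n (n+1) - b n (n+1) * of_real (v (n+1))"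
    unfolding hamil_commutator_def p_def q_def using n by simp
  ultimately show ?thesis unfolding c_def[symmetric] p_def[symmetric] q_def[symmetric]
    by (simp add: algebra_simps)
qed

lemma diag_step:
  assumes n: "1 \<le> n" "n < N" and Q: "dissip b + dissip (L b) \<le> Q"
  shows "cmod (b n n - b (n+1) (n+1)) \<le> diag_step_const * sqrt (Q / \<beta>)"
proof -
  let ?s = "sqrt (Q / \<beta>)"
  have Qb: "dissip b \<le> Q" and QLb: "dissip (L b) \<le> Q"
    using Q dissip_nonneg[of b] dissip_nonneg[of "L b"] by auto
  have s_nonneg: "0 \<le> ?s" using Qb dissip_nonneg[of b] \<beta>_pos by simp
  have inn: "n \<in> {1..N}" "n+1 \<in> {1..N}" using n by auto
  have off: "cmod (b n (n+1)) \<le> ?s" using norm_off_diag_le[OF inn] Qb by simp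
  define c where "c = edge_rate N zl zr n + edge_rate N zl zr (n+1) + \<beta>"
  have c: "0 \<le> c" "c \<le> 2 * (zl + zr) + \<beta>"
    unfolding c_def using edge_rate_nonneg edge_rate_le \<beta>_pos by (smt (verit))+
  have "cmod (b n n - b (n+1) (n+1))
      \<le> ?s + (2 * (zl + zr) + \<beta>) * ?s + ?s + potential_sum * ?s + ?s + potential_sum * ?s"
    unfolding diag_difference_eq[OF n] c_def[symmetric]
  proof (intro norm_triangle_mono)
    show "cmod (\<i> * L b n (n+1)) \<le> ?s"
      using norm_off_diag_le[OF inn _ QLb] by (simp add: norm_mult)
    show "cmod (\<i> * of_real c * b n (n+1)) \<le> (2 * (zl + zr) + \<beta>) * ?s"
      using c off s_nonneg by (simp add: norm_mult) (intro mult_mono, auto)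
    show "cmod (of_bool (1 < n) * b (n-1) (n+1)) \<le> ?s"
      using n by (intro norm_of_bool_mult_le norm_off_diag_le[OF _ inn(2) _ Qb] s_nonneg) auto
    show "cmod (- (of_real (v n) * b n (n+1))) \<le> potential_sum * ?s"
      unfolding norm_minus_cancel using inn(1) off s_nonneg by (rule norm_potential_mult_le)
    show "cmod (- (of_bool (n+1 < N) * b n (n+2))) \<le> ?s"
      unfolding norm_minus_cancel
      using n by (intro norm_of_bool_mult_le norm_off_diag_le[OF inn(1) _ _ Qb] s_nonneg) auto
    show "cmod (of_real (v (n+1)) * b n (n+1)) \<le> potential_sum * ?s"
      using inn(2) off s_nonneg by (rule norm_potential_mult_le)
  qed
  also have "\<dots> = diag_step_const * ?s"
    unfolding diag_step_const_def by (simp add: algebra_simps)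
  finally show ?thesis .
qed

lemma norm_diag_le:
  assumes Q: "dissip b + dissip (L b) \<le> Q"
  shows "n \<in> {1..N} \<Longrightarrow> cmod (b n n) \<le> sqrt (Q / (2 * zl)) + real (n - 1) * diag_step_const * sqrt (Q / \<beta>)"
proof (induction n)
  case (Suc n)
  show ?case
  proof (cases "n = 0")
    case True
    have "2 * zl * (cmod (b 1 1))\<^sup>2 \<le> Q"
      using corners_le_dissip[of b] Q dissip_nonneg[of "L b"] zr_pos
      by (smt (verit) zero_le_power2 mult_nonneg_nonneg)
    then have "(cmod (b 1 1))\<^sup>2 \<le> Q / (2 * zl)" using zl_pos by (simp add: field_simps)
    then show ?thesis using True by (simp add: real_le_rsqrt)
  next
    case False
    then have n: "1 \<le> n" "n < N" "n \<in> {1..N}" using Suc.prems by auto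
    have "cmod (b (n+1) (n+1)) \<le> cmod (b n n) + cmod (b n n - b (n+1) (n+1))"
      using norm_triangle_sub[of "b (n+1) (n+1)" "b n n"] by (simp add: norm_minus_commute)
    also have "\<dots> \<le> sqrt (Q / (2 * zl)) + (real (n - 1) + 1) * diag_step_const * sqrt (Q / \<beta>)"
      using Suc.IH[OF n(3)] diag_step[OF n(1,2) Q] by (simp add: algebra_simps)
    finally show ?thesis using n(1) by (simp add: of_nat_diff)
  qed
qed simp

definition hypocoercivity_const :: real where
  "hypocoercivity_const = real N * real N * (1 / sqrt (2 * zl) + (real N * diag_step_const + 1) / sqrt \<beta>)\<^sup>2"

lemma hypocoercivity_const_pos: "0 < hypocoercivity_const"
proof -
  have "0 < 1 / sqrt (2 * zl) + (real N * diag_step_const + 1) / sqrt \<beta>"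
    using zl_pos \<beta>_pos diag_step_const_nonneg by (intro add_pos_nonneg) auto
  then show ?thesis unfolding hypocoercivity_const_def using two_le_N by simp
qed

lemma hypocoercive_estimate: "frob_sq N b \<le> hypocoercivity_const * (dissip b + dissip (L b))"
proof -
  define Q where "Q = dissip b + dissip (L b)"
  have Q_nonneg: "0 \<le> Q" unfolding Q_def using dissip_nonneg[of b] dissip_nonneg[of "L b"] by simp
  let ?s = "sqrt (Q / \<beta>)"
  define B where "B = sqrt (Q / (2 * zl)) + real N * diag_step_const * ?s + ?s"
  have s_nonneg: "0 \<le> ?s" using Q_nonneg \<beta>_pos by simp
  have entry: "cmod (b i j) \<le> B" if "i \<in> {1..N}" "j \<in> {1..N}" for i j
  proof (cases "i = j")
    case True
    have "cmod (b i i) \<le> sqrt (Q / (2 * zl)) + real (i - 1) * diag_step_const * ?s"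
      using norm_diag_le[of b Q i] that Q_def by simp
    also have "\<dots> \<le> sqrt (Q / (2 * zl)) + real N * diag_step_const * ?s"
      using that diag_step_const_nonneg s_nonneg by (intro add_left_mono mult_right_mono) auto
    finally show ?thesis using True s_nonneg unfolding B_def by (simp add: add_increasing2)
  next
    case False
    have "cmod (b i j) \<le> ?s"
      using norm_off_diag_le[OF that False] dissip_nonneg[of "L b"] Q_def by simp
    moreover have "0 \<le> sqrt (Q / (2 * zl)) + real N * diag_step_const * ?s"
      using Q_nonneg zl_pos diag_step_const_nonneg s_nonneg by simp
    ultimately show ?thesis unfolding B_def by simp
  qed
  have "frob_sq N b \<le> real N * real N * B\<^sup>2"
    unfolding frob_sq_def by (intro double_sum_le power_mono entry) auto
  also have "B = sqrt Q * (1 / sqrt (2 * zl) + (real N * diag_step_const + 1) / sqrt \<beta>)"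
    unfolding B_def using zl_pos \<beta>_pos by (simp add: real_sqrt_divide field_simps)
  finally show ?thesis
    unfolding hypocoercivity_const_def Q_def[symmetric] using Q_nonneg by (simp add: power_mult_distrib mult_ac)
qed

sublocale hypocoercive_map N L hypocoercivity_const
  using hypocoercivity_const_pos hypocoercive_estimate by unfold_locales

lemma lgen_adj: "L (mat_adj b) = mat_adj (L b)"
proof (intro ext)
  fix i j
  show "L (mat_adj b) i j = mat_adj (L b) i j"
  proof (cases "i \<in> {1..N} \<and> j \<in> {1..N}")
    case True
    then have i: "i \<in> {1..N}" and j: "j \<in> {1..N}" by auto
    have "L (mat_adj b) i j = - \<i> * hamil_commutator v N (mat_adj b) i j
        - of_real (edge_rate N zl zr i + edge_rate N zl zr j) * cnj (b j i)
        - (if i = j then 0 else of_real \<beta> * cnj (b j i))"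
      unfolding lgen_inside[OF i j] by (simp add: mat_adj_def)
    also have "\<dots> = cnj (L b j i)"
      unfolding lgen_inside[OF j i] hamil_commutator_adj by (cases "i = j") (simp_all add: algebra_simps)
    finally show ?thesis unfolding mat_adj_def by simp
  qed (auto simp: mat_adj_def lgen_outside)
qed

end

section \<open>The steady state and its current\<close>

lemma two_mult_le_sq_add: "0 < (z::real) \<Longrightarrow> 2 * x * a \<le> z * a\<^sup>2 + x\<^sup>2 / z"
proof -
  assume z: "0 < z"
  have "0 \<le> (z * a - x)\<^sup>2 / z" using z by simp
  also have "(z * a - x)\<^sup>2 / z = z * a\<^sup>2 + x\<^sup>2 / z - 2 * x * a"
    using z by (simp add: power2_eq_square field_simps)
  finally show ?thesis by simp
qed

lemma double_sum_delta:
  fixes N a :: nat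
  assumes "a \<in> {1..N}"
  shows "(\<Sum>i\<in>{1..N}. \<Sum>j\<in>{1..N}. if i = a \<and> j = a then c else 0) = (c :: complex)"
proof -
  have "(\<Sum>j\<in>{1..N}. if i = a \<and> j = a then c else 0) = (if i = a then c else 0)" for i
  proof (cases "i = a")
    case True
    then have "(\<Sum>j\<in>{1..N}. if i = a \<and> j = a then c else 0) = (\<Sum>j\<in>{1..N}. if j = a then c else 0)"
      by (intro sum.cong refl) auto
    also have "\<dots> = c" by (subst sum.delta) (use assms in auto)
    finally show ?thesis using True by simp
  qed simp
  then show ?thesis using assms by (simp add: sum.delta')
qed

locale lindblad_steady_state = lindblad_chain +
  fixes ail air :: real and R :: cmat
  assumes ail_nonneg: "0 \<le> ail" and air_nonneg: "0 \<le> air" and supported_R: "supported N R"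
    and L_R: "L R = (\<lambda>i j. - (of_real (2 * ail) * proj 1 i j + of_real (2 * air) * proj N i j))"
begin

lemma R_hermitian: "R j i = cnj (R i j)"
proof -
  define d where "d = (\<lambda>i j. R i j + (-1) * mat_adj R i j)"
  have "supported N d" using supported_R unfolding supported_def d_def mat_adj_def by auto
  moreover have "L d = (\<lambda>i j. 0)"
    unfolding d_def L_add L_scale lgen_adj L_R by (intro ext) (auto simp: mat_adj_def proj_def)
  ultimately have "d = (\<lambda>i j. 0)" by (rule eq_zero_if_L_eq_zero)
  then have "d j i = 0" by simp
  then show ?thesis unfolding d_def mat_adj_def by simp
qed

lemma dissip_R: "dissip R = 2 * ail * Re (R 1 1) + 2 * air * Re (R N N)"
proof -
  have "cnj (R i j) * L R i j = - (if i = 1 \<and> j = 1 then of_real (2 * ail) * cnj (R 1 1) else 0)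
      - (if i = N \<and> j = N then of_real (2 * air) * cnj (R N N) else 0)" for i j
    unfolding L_R proj_def by (auto simp: algebra_simps)
  moreover have "1 \<in> {1..N}" "N \<in> {1..N}" using two_le_N by auto
  ultimately have "frob_inner N R (L R) = - of_real (2 * ail) * cnj (R 1 1) - of_real (2 * air) * cnj (R N N)"
    unfolding frob_inner_def using two_le_N
    by (simp only: sum_subtractf sum_negf double_sum_delta) auto
  then show ?thesis unfolding dissip_def by simp
qed

definition dissip_bound :: real where
  "dissip_bound = 2 * (ail\<^sup>2 / zl + air\<^sup>2 / zr)"

lemma dissip_R_le: "dissip R \<le> dissip_bound"
proof -
  have "dissip R \<le> 2 * ail * cmod (R 1 1) + 2 * air * cmod (R N N)"
    unfolding dissip_R using ail_nonneg air_nonneg complex_Re_le_cmod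
    by (intro add_mono mult_left_mono) auto
  also have "\<dots> \<le> (zl * (cmod (R 1 1))\<^sup>2 + ail\<^sup>2 / zl) + (zr * (cmod (R N N))\<^sup>2 + air\<^sup>2 / zr)"
    using zl_pos zr_pos by (intro add_mono two_mult_le_sq_add)
  also have "\<dots> \<le> dissip R / 2 + (ail\<^sup>2 / zl + air\<^sup>2 / zr)"
    using corners_le_dissip[of R] by linarith
  finally show ?thesis unfolding dissip_bound_def by argo
qed

abbreviation off_diag_bound :: real where "off_diag_bound \<equiv> sqrt (dissip_bound / \<beta>)"

lemma off_diag_bound_nonneg: "0 \<le> off_diag_bound"
  using dissip_R_le dissip_nonneg[of R] \<beta>_pos by simp

lemma norm_R_off_diag_le: "i \<in> {1..N} \<Longrightarrow> j \<in> {1..N} \<Longrightarrow> i \<noteq> j \<Longrightarrow> cmod (R i j) \<le> off_diag_bound"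
  using norm_off_diag_le dissip_R_le by blast

definition current :: "nat \<Rightarrow> real" where
  "current n = Im (R (n+1) n)"

lemma continuity_equation:
  assumes n: "n \<in> {1..N}"
  shows "2 * of_bool (1 < n) * current (n-1) - 2 * of_bool (n < N) * current n
      - 2 * edge_rate N zl zr n * Re (R n n) = - 2 * ail * of_bool (n = 1) - 2 * air * of_bool (n = N)"
proof -
  have "Re (L R n n) = - 2 * ail * of_bool (n = 1) - 2 * air * of_bool (n = N)"
    unfolding L_R proj_def by auto
  moreover have "Re (L R n n) = Im (hamil_commutator v N R n n) - 2 * edge_rate N zl zr n * Re (R n n)"
    unfolding lgen_inside[OF n n] by simp
  moreover have "Im (hamil_commutator v N R n n) = 2 * of_bool (1 < n) * current (n-1) - 2 * of_bool (n < N) * current n"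
    using R_hermitian[of n "n+1"] R_hermitian[of "n-1" n] n
    unfolding hamil_commutator_def current_def by (cases "1 < n"; cases "n < N") auto
  ultimately show ?thesis by simp
qed

lemma current_const: "1 \<le> n \<Longrightarrow> n < N \<Longrightarrow> current n = current 1"
proof (induction n)
  case (Suc n)
  show ?case
  proof (cases "n = 0")
    case False
    then have "current (Suc n) = current n"
      using continuity_equation[of "Suc n"] Suc.prems edge_rate_interior[of "Suc n"] by simp
    then show ?thesis using Suc False by simp
  qed simp
qed simp

lemma Re_R_first: "Re (R 1 1) = (ail - current 1) / zl"
  using continuity_equation[of 1, unfolded edge_rate_1] two_le_N zl_pos by (simp add: field_simps)

lemma Re_R_last: "Re (R N N) = (air + current 1) / zr"
proof -
  have "current (N - 1) = current 1" using two_le_N by (intro current_const) auto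
  then show ?thesis
    using continuity_equation[of N] two_le_N zr_pos by (simp add: edge_rate_N field_simps)
qed

definition current_step_const :: real where
  "current_step_const = 2 + 2 * potential_sum + 2 * (zl + zr)"

lemma current_balance:
  assumes n: "1 \<le> n" "n < N"
  shows "\<beta> * current n - (Re (R n n) - Re (R (n+1) (n+1)))
      = Re (of_bool (n+1 < N) * R (n+2) n + (- (of_bool (1 < n) * R (n+1) (n-1)))
            + (- (of_real (v (n+1)) * R (n+1) n)) + of_real (v n) * R (n+1) n)
        - (edge_rate N zl zr (n+1) + edge_rate N zl zr n) * current n"
proof -
  have inn: "n \<in> {1..N}" "n+1 \<in> {1..N}" using n by auto
  define c where "c = edge_rate N zl zr (n+1) + edge_rate N zl zr n"
  define p where "p = of_bool (1 < n) * R (n+1) (n-1)"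
  define q where "q = of_bool (n+1 < N) * R (n+2) n"
  define E where "E = q + (- p) + (- (of_real (v (n+1)) * R (n+1) n)) + of_real (v n) * R (n+1) n"
  have H: "hamil_commutator v N R (n+1) n = R (n+1) (n+1) - R n n - E"
    unfolding hamil_commutator_def E_def p_def q_def using n by (simp add: algebra_simps)
  have "L R (n+1) n = 0" unfolding L_R proj_def by simp
  then have "- \<i> * (R (n+1) (n+1) - R n n - E) - of_real (c + \<beta>) * R (n+1) n = 0"
    unfolding lgen_inside[OF inn(2,1)] H c_def by (simp add: algebra_simps)
  then have "Im (- \<i> * (R (n+1) (n+1) - R n n - E) - of_real (c + \<beta>) * R (n+1) n) = 0" by simp
  then show ?thesis
    unfolding c_def[symmetric] p_def[symmetric] q_def[symmetric] E_def[symmetric] current_def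
    by (simp add: algebra_simps)
qed

lemma current_step:
  assumes n: "1 \<le> n" "n < N"
  shows "\<bar>\<beta> * current n - (Re (R n n) - Re (R (n+1) (n+1)))\<bar> \<le> current_step_const * off_diag_bound"
proof -
  let ?\<delta> = off_diag_bound
  have inn: "n \<in> {1..N}" "n+1 \<in> {1..N}" using n by auto
  define c where "c = edge_rate N zl zr (n+1) + edge_rate N zl zr n"
  define E where "E = of_bool (n+1 < N) * R (n+2) n + (- (of_bool (1 < n) * R (n+1) (n-1)))
      + (- (of_real (v (n+1)) * R (n+1) n)) + of_real (v n) * R (n+1) n"
  have off: "cmod (R (n+1) n) \<le> ?\<delta>" using norm_R_off_diag_le[OF inn(2,1)] by simp
  have c: "0 \<le> c" "c \<le> 2 * (zl + zr)"
    unfolding c_def using edge_rate_nonneg edge_rate_le by (smt (verit))+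
  have "cmod E \<le> ?\<delta> + ?\<delta> + potential_sum * ?\<delta> + potential_sum * ?\<delta>"
    unfolding E_def
  proof (intro norm_triangle_mono)
    show "cmod (of_bool (n+1 < N) * R (n+2) n) \<le> ?\<delta>"
      using n by (intro norm_of_bool_mult_le norm_R_off_diag_le[OF _ inn(1)] off_diag_bound_nonneg) auto
    show "cmod (- (of_bool (1 < n) * R (n+1) (n-1))) \<le> ?\<delta>"
      unfolding norm_minus_cancel
      using n by (intro norm_of_bool_mult_le norm_R_off_diag_le[OF inn(2)] off_diag_bound_nonneg) auto
    show "cmod (- (of_real (v (n+1)) * R (n+1) n)) \<le> potential_sum * ?\<delta>"
      unfolding norm_minus_cancel using inn(2) off off_diag_bound_nonneg by (rule norm_potential_mult_le)
    show "cmod (of_real (v n) * R (n+1) n) \<le> potential_sum * ?\<delta>"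
      using inn(1) off off_diag_bound_nonneg by (rule norm_potential_mult_le)
  qed
  moreover have "\<bar>c * current n\<bar> \<le> 2 * (zl + zr) * ?\<delta>"
    unfolding current_def abs_mult using c off abs_Im_le_cmod[of "R (n+1) n"]
    by (intro mult_mono) auto
  ultimately have "\<bar>Re E - c * current n\<bar>
      \<le> (?\<delta> + ?\<delta> + potential_sum * ?\<delta> + potential_sum * ?\<delta>) + 2 * (zl + zr) * ?\<delta>"
    using abs_Re_le_cmod[of E] abs_triangle_ineq4[of "Re E" "c * current n"] by linarith
  then show ?thesis
    unfolding current_balance[OF n] E_def[symmetric] c_def[symmetric] current_step_const_def
    by (simp add: algebra_simps)
qed

lemma diagonal_drop:
  "\<bar>\<beta> * current 1 * real (N - 1) - (Re (R 1 1) - Re (R N N))\<bar> \<le> real (N - 1) * current_step_const * off_diag_bound"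
proof -
  let ?d = "\<lambda>k. \<beta> * current 1 - (Re (R (k-1) (k-1)) - Re (R k k))"
  have "(\<Sum>k\<in>{Suc 1..N}. Re (R (k-1) (k-1)) - Re (R k k)) = Re (R 1 1) - Re (R N N)"
    using sum_telescope''[of 1 N "\<lambda>k. - Re (R k k)"] two_le_N by (simp add: algebra_simps)
  then have "\<beta> * current 1 * real (N - 1) - (Re (R 1 1) - Re (R N N)) = (\<Sum>k\<in>{Suc 1..N}. ?d k)"
    by (simp only: sum_subtractf) simp
  also have "\<bar>\<dots>\<bar> \<le> (\<Sum>k\<in>{Suc 1..N}. current_step_const * off_diag_bound)"
  proof (rule order_trans[OF sum_abs sum_mono])
    fix k assume k: "k \<in> {Suc 1..N}"
    then have "1 \<le> k - 1" "k - 1 < N" "k - 1 + 1 = k" by auto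
    then show "\<bar>?d k\<bar> \<le> current_step_const * off_diag_bound"
      using current_step[of "k - 1"] current_const[of "k - 1"] by simp
  qed
  finally show ?thesis by simp
qed

definition current_error :: real where
  "current_error = 2 * (current_step_const + 1 / zl + 1 / zr) * sqrt dissip_bound"

lemma current_estimate:
  "\<bar>\<beta> * (2 * Im (R 2 1)) - 2 * (ail / zl - air / zr) / (real N - 1)\<bar> \<le> current_error / sqrt \<beta>"
proof -
  define M where "M = real N - 1"
  define T where "T = ail / zl - air / zr"
  define w where "w = 1 / zl + 1 / zr"
  have M: "1 \<le> M" "real (N - 1) = M" unfolding M_def using two_le_N by (simp_all add: of_nat_diff)
  have w: "0 \<le> w" unfolding w_def using zl_pos zr_pos by simp
  have g: "Im (R 2 1) = current 1" unfolding current_def by (simp add: numeral_2_eq_2)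
  have g_le: "\<bar>current 1 * w\<bar> \<le> off_diag_bound * w"
    using norm_R_off_diag_le[of 2 1] abs_Im_le_cmod[of "R 2 1"] two_le_N g w
    by (simp add: abs_mult mult_right_mono)
  have "Re (R 1 1) - Re (R N N) = T - current 1 * w"
    unfolding Re_R_first Re_R_last T_def w_def using zl_pos zr_pos by (simp add: field_simps)
  then have "\<bar>\<beta> * current 1 * M - T\<bar> \<le> M * current_step_const * off_diag_bound + off_diag_bound * w"
    using diagonal_drop g_le unfolding M(2) by linarith
  also have "\<dots> \<le> M * ((current_step_const + w) * off_diag_bound)"
    using M(1) w off_diag_bound_nonneg mult_right_mono[of 1 M "off_diag_bound * w"] by (simp add: algebra_simps)
  finally have "\<bar>\<beta> * current 1 * M - T\<bar> / M \<le> (current_step_const + w) * off_diag_bound"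
    using M(1) by (simp add: divide_le_eq mult.commute)
  moreover have "\<beta> * current 1 * M - T = M * (\<beta> * current 1 - T / M)"
    using M(1) by (simp add: algebra_simps)
  ultimately have "\<bar>\<beta> * current 1 - T / M\<bar> \<le> (current_step_const + w) * off_diag_bound"
    using M(1) by (simp add: abs_mult)
  moreover have "current_error / sqrt \<beta> = 2 * ((current_step_const + w) * off_diag_bound)"
    unfolding current_error_def w_def real_sqrt_divide by (simp add: add.assoc)
  ultimately show ?thesis
    unfolding g M_def[symmetric] T_def[symmetric] by (simp add: abs_mult)
qed

end

lemma Jcur_error_bound:
  fixes v :: "nat \<Rightarrow> real" and N :: nat and ail aol air aor :: real
  assumes "2 \<le> N" "0 \<le> ail" "0 \<le> aol" "0 \<le> air" "0 \<le> aor" "0 < ail + aol" "0 < air + aor"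
  shows "\<exists>c. \<forall>\<beta>>0. \<bar>\<beta> * Jcur v N ail aol air aor \<beta> - 2 * (ail / (ail + aol) - air / (air + aor)) / (real N - 1)\<bar>
      \<le> c / sqrt \<beta>"
  \<comment> \<open>The locale constant current_error does not involve beta, so one c serves all beta.\<close>
proof (intro exI allI impI)
  fix \<beta> :: real
  assume "0 < \<beta>"
  then interpret lindblad_chain v N "ail + aol" "air + aor" \<beta>
    using assms by unfold_locales auto
  define a where "a = (\<lambda>i j. of_real (2 * ail) * proj 1 i j + of_real (2 * air) * proj N i j)"
  have a: "supported N a" unfolding supported_def a_def proj_def using assms(1) by auto
  interpret lindblad_steady_state v N "ail + aol" "air + aor" \<beta> ail air "semigrp_integral a"
    using assms(2,4) supported_semigrp_integral[OF a] L_semigrp_integral[OF a] by unfold_locales (auto simp: a_def)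
  have "Jcur v N ail aol air aor \<beta> = 2 * Im (semigrp_integral a 2 1)"
    unfolding Jcur_def Rinf_def semigrp_integral_def a_def ..
  then show "\<bar>\<beta> * Jcur v N ail aol air aor \<beta> - 2 * (ail / (ail + aol) - air / (air + aor)) / (real N - 1)\<bar>
      \<le> lindblad_steady_state.current_error v N (ail + aol) (air + aor) ail air / sqrt \<beta>"
    using current_estimate by simp
qed

theorem mainTheorem15:
  fixes v :: "nat \<Rightarrow> real" and N :: nat and ail aol air aor :: real
  assumes "bounded (range v)"
    and "N \<ge> 2"
    and "ail \<ge> 0" "aol \<ge> 0" "air \<ge> 0" "aor \<ge> 0"
    and "ail + aol > 0" "air + aor > 0"
  shows "((\<lambda>\<beta>. \<beta> * Jcur v N ail aol air aor \<beta>) \<longlongrightarrow>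
           2 * (ail * aor - aol * air) / ((ail + aol) * (air + aor) * (real N - 1))) at_top"
proof -
  define T where "T = 2 * (ail / (ail + aol) - air / (air + aor)) / (real N - 1)"
  obtain c where c: "\<forall>\<beta>>0. \<bar>\<beta> * Jcur v N ail aol air aor \<beta> - T\<bar> \<le> c / sqrt \<beta>"
    using Jcur_error_bound[OF assms(2-8)] unfolding T_def ..
  have "((\<lambda>\<beta>. c / sqrt \<beta>) \<longlongrightarrow> 0) at_top"
    by (intro tendsto_divide_0[OF tendsto_const] filterlim_at_top_imp_at_infinity sqrt_at_top)
  moreover have "\<forall>\<^sub>F \<beta> in at_top. norm (\<beta> * Jcur v N ail aol air aor \<beta> - T) \<le> c / sqrt \<beta>"
    using eventually_gt_at_top[of 0] by (rule eventually_mono) (simp add: c)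
  ultimately have "((\<lambda>\<beta>. \<beta> * Jcur v N ail aol air aor \<beta> - T) \<longlongrightarrow> 0) at_top"
    by (rule Lim_null_comparison[rotated])
  moreover have "T = 2 * (ail * aor - aol * air) / ((ail + aol) * (air + aor) * (real N - 1))"
    unfolding T_def using assms(7,8) by (simp add: field_simps)
  ultimately show ?thesis by (simp add: LIM_zero_cancel)
qed

end
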